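(* Let $G$ be a structured single-touch computation DAG, and consider its sequential execution (one processor, parsimonious work stealing, future thread first at every fork). Then for every touch $x$ in $G$, with corresponding fork $v$: (i) the future parent of $x$ is executed before the local parent of $x$; and (ii) the right child of $v$ is the node executed immediately after the future parent of $x$.
   Context: Computation model. A future-parallel computation is a finite DAG whose nodes are tasks. Every node has in-degree and out-degree in $\{1,2\}$, except a distinguished root node (in-degree $0$) and a distinguished final node (out-degree $0$). Edges are of three types: continuation edges, future edges and touch edges. A thread is a maximal chain of nodes connected by continuation edges. The main thread begins at the root and ends at the final node. Every other thread $t$ begins at a node with an incoming future edge from a node $v$ of another thread $t'$; then $v$ is the fork of $t$, $t'$ is the parent thread of $t$, and $t$ is the future thread at $v$. A fork $v$ has two children: the first node of $t$ (the left child) and the continuation successor of $v$ in $t'$ (the right child); both have in-degree $1$ and are not touches. The last node of every non-main thread has exactly one outgoing edge, which is a touch edge into another thread. If there is a touch edge from a node $v_1$ of thread $t_1$ to a node $v_2$ of thread $t_2\neq t_1$, and a continuation edge from $u_2$ to $v_2$, then $v_2$ is a touch of $t_1$ (a touch by $t_2$, i.e. it lies in $t_2$), $v_1$ is its future parent, $u_2$ its local parent, $t_1$ its future thread, and the fork of $t_1$ is its corresponding fork. A node $w$ is a descendant of a node $u$ if there is a directed path from $u$ to $w$. A DAG is a structured future-parallel computation if for the future thread $t$ of any fork $v$: (1) the local parents of the touches of $t$ are descendants of $v$, and (2) at least one touch of $t$ is a descendant of the right child of $v$. It is a structured single-touch computation if, in addition, each future thread $t$ spawned at a fork $v$ has exactly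 one touch, and this touch is a descendant of the right child of $v$ (its future parent is then the last node of $t$). Scheduler. In parsimonious work stealing with $P$ processors, each processor has a deque. A node is ready when all its parents have been executed. After executing a node of out-degree 1, a processor continues with its child if that child is ready. After executing a fork, it pushes one child onto the bottom of its deque and executes the other; "future thread first" means it executes the left child (first node of the future thread) and pushes the right child. When a processor has no node to execute, it pops the bottom node of its own deque if nonempty, and otherwise steals the top node of the deque of some other processor. The sequential execution is the execution with $P=1$. *)

theory Defs
  imports Main
begin

text \<open>A future-parallel computation is given by a finite node set V, three edge
relations C (continuation), F (future), T (touch), a root r and a final node f.\<close>

definition edges :: "('v \<times> 'v) set \<Rightarrow> ('v \<times> 'v) set \<Rightarrow> ('v \<times> 'v) set \<Rightarrow> ('v \<times> 'v) set" where
  "edges C F T = C \<union> F \<union> T"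

definition indeg :: "('v \<times> 'v) set \<Rightarrow> 'v \<Rightarrow> nat" where
  "indeg E v = card {u. (u, v) \<in> E}"

definition outdeg :: "('v \<times> 'v) set \<Rightarrow> 'v \<Rightarrow> nat" where
  "outdeg E v = card {w. (v, w) \<in> E}"

definition thread_of :: "('v \<times> 'v) set \<Rightarrow> 'v \<Rightarrow> 'v set" where
  "thread_of C v = {u. (u, v) \<in> (C \<union> C\<inverse>)\<^sup>*}"

definition future_dag ::
  "'v set \<Rightarrow> ('v \<times> 'v) set \<Rightarrow> ('v \<times> 'v) set \<Rightarrow> ('v \<times> 'v) set \<Rightarrow> 'v \<Rightarrow> 'v \<Rightarrow> bool" where
  "future_dag V C F T r f \<longleftrightarrow>
     finite V \<and> C \<subseteq> V \<times> V \<and> F \<subseteq> V \<times> V \<and> T \<subseteq> V \<times> V \<and>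
     C \<inter> F = {} \<and> C \<inter> T = {} \<and> F \<inter> T = {} \<and>
     r \<in> V \<and> f \<in> V \<and>
     acyclic (edges C F T) \<and>
     indeg (edges C F T) r = 0 \<and>
     (\<forall>v\<in>V. v \<noteq> r \<longrightarrow> indeg (edges C F T) v \<in> {1, 2}) \<and>
     outdeg (edges C F T) f = 0 \<and>
     (\<forall>v\<in>V. v \<noteq> f \<longrightarrow> outdeg (edges C F T) v \<in> {1, 2}) \<and>
     \<comment> \<open>continuation edges form chains\<close>
     (\<forall>u v w. (u, v) \<in> C \<longrightarrow> (u, w) \<in> C \<longrightarrow> v = w) \<and>
     (\<forall>u v w. (u, w) \<in> C \<longrightarrow> (v, w) \<in> C \<longrightarrow> u = v) \<and>
     \<comment> \<open>the main thread runs from the root to the final node\<close>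
     (r, f) \<in> C\<^sup>* \<and>
     \<comment> \<open>every other thread begins at a node with an incoming future edge from another thread\<close>
     (\<forall>s\<in>V. s \<noteq> r \<longrightarrow> (\<nexists>u. (u, s) \<in> C) \<longrightarrow>
        (\<exists>v. (v, s) \<in> F \<and> v \<notin> thread_of C s)) \<and>
     \<comment> \<open>a fork has a left child (future edge) and a right child (continuation edge),
         both of in-degree 1 and not touches\<close>
     (\<forall>v l. (v, l) \<in> F \<longrightarrow>
        (\<exists>rc. (v, rc) \<in> C \<and> indeg (edges C F T) l = 1 \<and> indeg (edges C F T) rc = 1 \<and>
              (\<nexists>p. (p, l) \<in> T) \<and> (\<nexists>p. (p, rc) \<in> T))) \<and>
     \<comment> \<open>the last node of every non-main thread has exactly one outgoing edge,
         a touch edge into another thread\<close>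
     (\<forall>u\<in>V. (\<nexists>w. (u, w) \<in> C) \<longrightarrow> u \<notin> thread_of C r \<longrightarrow>
        outdeg (edges C F T) u = 1 \<and> (\<exists>w. (u, w) \<in> T \<and> w \<notin> thread_of C u)) \<and>
     \<comment> \<open>touch edges go between different threads and leave from the last node
         of a non-main thread\<close>
     (\<forall>a b. (a, b) \<in> T \<longrightarrow> b \<notin> thread_of C a \<and> (\<nexists>w. (a, w) \<in> C) \<and> a \<notin> thread_of C r)"

definition is_touch_of :: "('v \<times> 'v) set \<Rightarrow> ('v \<times> 'v) set \<Rightarrow> 'v set \<Rightarrow> 'v \<Rightarrow> bool" where
  "is_touch_of C T t x \<longleftrightarrow> (\<exists>v1\<in>t. (v1, x) \<in> T) \<and> x \<notin> t \<and> (\<exists>u. (u, x) \<in> C)"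

definition structured ::
  "('v \<times> 'v) set \<Rightarrow> ('v \<times> 'v) set \<Rightarrow> ('v \<times> 'v) set \<Rightarrow> bool" where
  "structured C F T \<longleftrightarrow>
     (\<forall>v l rc. (v, l) \<in> F \<longrightarrow> (v, rc) \<in> C \<longrightarrow>
        (\<forall>x u. is_touch_of C T (thread_of C l) x \<longrightarrow> (u, x) \<in> C \<longrightarrow> (v, u) \<in> (edges C F T)\<^sup>*) \<and>
        (\<exists>x. is_touch_of C T (thread_of C l) x \<and> (rc, x) \<in> (edges C F T)\<^sup>*))"

definition structured_single_touch ::
  "('v \<times> 'v) set \<Rightarrow> ('v \<times> 'v) set \<Rightarrow> ('v \<times> 'v) set \<Rightarrow> bool" where
  "structured_single_touch C F T \<longleftrightarrow>
     structured C F T \<and>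
     (\<forall>v l rc. (v, l) \<in> F \<longrightarrow> (v, rc) \<in> C \<longrightarrow>
        (\<exists>!x. is_touch_of C T (thread_of C l) x) \<and>
        (\<forall>x. is_touch_of C T (thread_of C l) x \<longrightarrow> (rc, x) \<in> (edges C F T)\<^sup>*))"

definition ready :: "('v \<times> 'v) set \<Rightarrow> 'v list \<Rightarrow> 'v \<Rightarrow> bool" where
  "ready E es c \<longleftrightarrow> (\<forall>p. (p, c) \<in> E \<longrightarrow> p \<in> set es)"

text \<open>Sequential (P = 1) parsimonious work stealing, future thread first.
State: (nodes executed so far in order, node assigned to the processor, deque).
The bottom of the deque is the end of the list.  With one processor there is
nobody to steal from.\<close>
inductive seq_step ::
  "('v \<times> 'v) set \<Rightarrow> ('v \<times> 'v) set \<Rightarrow> ('v \<times> 'v) set \<Rightarrow>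
   ('v list \<times> 'v option \<times> 'v list) \<Rightarrow> ('v list \<times> 'v option \<times> 'v list) \<Rightarrow> bool"
  for C F T where
  fork: "(u, l) \<in> F \<Longrightarrow> (u, rc) \<in> C \<Longrightarrow>
         seq_step C F T (es, Some u, dq) (es @ [u], Some l, dq @ [rc])"
| cont: "\<nexists>l. (u, l) \<in> F \<Longrightarrow> {c. (u, c) \<in> edges C F T} = {c} \<Longrightarrow>
         ready (edges C F T) (es @ [u]) c \<Longrightarrow>
         seq_step C F T (es, Some u, dq) (es @ [u], Some c, dq)"
| idle: "\<nexists>l. (u, l) \<in> F \<Longrightarrow>
         \<not> (\<exists>c. {c. (u, c) \<in> edges C F T} = {c} \<and> ready (edges C F T) (es @ [u]) c) \<Longrightarrow>
         seq_step C F T (es, Some u, dq) (es @ [u], None, dq)"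
| pop:  "seq_step C F T (es, None, dq @ [w]) (es, Some w, dq)"

definition seq_exec ::
  "('v \<times> 'v) set \<Rightarrow> ('v \<times> 'v) set \<Rightarrow> ('v \<times> 'v) set \<Rightarrow> 'v \<Rightarrow> 'v list \<Rightarrow> bool" where
  "seq_exec C F T r es \<longleftrightarrow> (seq_step C F T)\<^sup>*\<^sup>* ([], Some r, []) (es, None, [])"

end

theory Submission
  imports Defs
begin

text \<open>With one processor the execution is a depth-first traversal of the spawn tree
formed by continuation and future edges. Call a fork open while its right child waits in
the deque: the open forks are nested, each one in the future thread spawned by the
previous one, and the processor always works on the thread spawned by the last of them.

When the processor reaches the last node of that thread, the corresponding touch x cannot
be ready: by the single-touch property x descends from the right child of the fork, which
has not been executed, so neither has the local parent of x. The processor therefore goes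
idle and pops the right child, which is thus executed right after the future parent.

Conversely, when a local parent is executed, structuredness puts it below the fork of the
touching thread, so that fork has been executed. It cannot still be open, because the
unexecuted part of the spawn subtree of an open fork is entered by no unexecuted edge from
outside. So the future thread is finished and the future parent came first.\<close>

lemma rtrancl_sym_closure_comparable:
  assumes "single_valued S" "single_valued (S\<inverse>)" "(a, b) \<in> (S \<union> S\<inverse>)\<^sup>*"
  shows "(a, b) \<in> S\<^sup>* \<or> (b, a) \<in> S\<^sup>*"
  using assms(3)
proof (induction rule: rtrancl_induct)
  case base
  then show ?case by simp
next
  case (step y z)
  show ?case
  proof (cases "(y, z) \<in> S")
    case yz: True
    show ?thesis
    proof (cases "(a, y) \<in> S\<^sup>* \<or> y = a")
      case True
      then show ?thesis using yz by (meson rtrancl.rtrancl_into_rtrancl r_into_rtrancl)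
    next
      case False
      then obtain c where "(y, c) \<in> S" "(c, a) \<in> S\<^sup>*"
        using step.IH by (meson converse_rtranclE)
      then show ?thesis using yz assms(1) by (auto dest: single_valuedD)
    qed
  next
    case False
    hence zy: "(z, y) \<in> S" using step.hyps(2) by blast
    show ?thesis
    proof (cases "(y, a) \<in> S\<^sup>* \<or> y = a")
      case True
      then show ?thesis using zy by (meson converse_rtrancl_into_rtrancl r_into_rtrancl)
    next
      case False
      then obtain c where "(a, c) \<in> S\<^sup>*" "(c, y) \<in> S"
        using step.IH by (metis rtranclE)
      then show ?thesis using zy assms(2) by (auto dest: single_valuedD)
    qed
  qed
qed

lemma rtrancl_crossing_edge:
  assumes "(v, y) \<in> S\<^sup>*" "P y" "\<not> P v"
  shows "\<exists>a b. (v, a) \<in> S\<^sup>* \<and> (a, b) \<in> S \<and> (b, y) \<in> S\<^sup>* \<and> \<not> P a \<and> P b"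
  using assms
proof (induction rule: converse_rtrancl_induct)
  case base
  then show ?case by blast
next
  case (step v c)
  show ?case
  proof (cases "P c")
    case True
    then show ?thesis using step by blast
  next
    case False
    then show ?thesis using step by (meson converse_rtrancl_into_rtrancl)
  qed
qed

lemma rtrancl_backward_closed:
  "(a, b) \<in> S\<^sup>* \<Longrightarrow> b \<in> X \<Longrightarrow> (\<And>a b. (a, b) \<in> S \<Longrightarrow> b \<in> X \<Longrightarrow> a \<in> X) \<Longrightarrow> a \<in> X"
  by (induction rule: converse_rtrancl_induct) auto

lemma right_unique_rtranclp_comparable:
  assumes "right_unique P" "P\<^sup>*\<^sup>* a b" "P\<^sup>*\<^sup>* a c"
  shows "P\<^sup>*\<^sup>* b c \<or> P\<^sup>*\<^sup>* c b"
  using assms(2)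
proof (induction rule: rtranclp_induct)
  case base
  then show ?case using assms(3) by blast
next
  case (step y z)
  show ?case
  proof (cases "P\<^sup>*\<^sup>* c y \<or> y = c")
    case True
    then show ?thesis using step.hyps(2) by (meson rtranclp.rtrancl_into_rtrancl r_into_rtranclp)
  next
    case False
    then obtain z' where "P y z'" "P\<^sup>*\<^sup>* z' c"
      using step.IH by (metis converse_rtranclpE)
    then show ?thesis using assms(1) step.hyps(2) by (auto dest: right_uniqueD)
  qed
qed

lemma card_1_eq_singleton: "finite A \<Longrightarrow> card A = 1 \<Longrightarrow> x \<in> A \<Longrightarrow> A = {x}"
  by (metis card_1_singletonE singletonD)

section \<open>Future-parallel computations\<close>

locale future_computation =
  fixes V :: "'v set" and C F T :: "('v \<times> 'v) set" and r f :: 'v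
  assumes future_dag: "future_dag V C F T r f"
begin

abbreviation "E \<equiv> edges C F T"

text \<open>Without touch edges every node has at most one parent: continuation and future
edges form the spawn tree.\<close>
abbreviation "R \<equiv> C \<union> F"

lemma
  shows finite_V: "finite V"
    and C_in_V: "C \<subseteq> V \<times> V" and F_in_V: "F \<subseteq> V \<times> V" and T_in_V: "T \<subseteq> V \<times> V"
    and root_in_V: "r \<in> V"
    and C_F_disjoint: "C \<inter> F = {}"
    and acyclic_E: "acyclic E"
    and root_indeg: "indeg E r = 0"
    and indeg_nonroot[rule_format]: "\<forall>v\<in>V. v \<noteq> r \<longrightarrow> indeg E v \<in> {1, 2}"
    and final_outdeg: "outdeg E f = 0"
    and outdeg_nonfinal[rule_format]: "\<forall>v\<in>V. v \<noteq> f \<longrightarrow> outdeg E v \<in> {1, 2}"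
    and C_functional[rule_format]: "\<forall>u v w. (u, v) \<in> C \<longrightarrow> (u, w) \<in> C \<longrightarrow> v = w"
    and C_injective[rule_format]: "\<forall>u v w. (u, w) \<in> C \<longrightarrow> (v, w) \<in> C \<longrightarrow> u = v"
    and thread_start_forked[rule_format]: "\<forall>s\<in>V. s \<noteq> r \<longrightarrow> (\<nexists>u. (u, s) \<in> C) \<longrightarrow>
       (\<exists>v. (v, s) \<in> F \<and> v \<notin> thread_of C s)"
    and fork_children[rule_format]: "\<forall>v l. (v, l) \<in> F \<longrightarrow> (\<exists>rc. (v, rc) \<in> C \<and>
       indeg E l = 1 \<and> indeg E rc = 1 \<and> (\<nexists>p. (p, l) \<in> T) \<and> (\<nexists>p. (p, rc) \<in> T))"
    and thread_end_touches[rule_format]: "\<forall>u\<in>V. (\<nexists>w. (u, w) \<in> C) \<longrightarrow> u \<notin> thread_of C r \<longrightarrow>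
       outdeg E u = 1 \<and> (\<exists>w. (u, w) \<in> T \<and> w \<notin> thread_of C u)"
    and touch_edge[rule_format]: "\<forall>a b. (a, b) \<in> T \<longrightarrow>
       b \<notin> thread_of C a \<and> (\<nexists>w. (a, w) \<in> C) \<and> a \<notin> thread_of C r"
  using future_dag unfolding future_dag_def by simp_all

lemma edges_in_V: "E \<subseteq> V \<times> V"
  using C_in_V F_in_V T_in_V unfolding edges_def by blast

lemma
  shows C_sub_E: "C \<subseteq> E" and F_sub_E: "F \<subseteq> E" and T_sub_E: "T \<subseteq> E" and R_sub_E: "R \<subseteq> E"
  unfolding edges_def by auto

lemma finite_E: "finite E"
  using edges_in_V finite_V by (meson finite_SigmaI infinite_super)

lemma wf_E: "wf E"
  using finite_E acyclic_E by (rule finite_acyclic_wf)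

lemma acyclic_R: "acyclic R"
  using acyclic_E acyclic_subset R_sub_E by blast

lemma edge_irrefl: "(a, b) \<in> E \<Longrightarrow> a \<noteq> b"
  using acyclic_E unfolding acyclic_def by blast

lemma finite_parents: "finite {a. (a, b) \<in> E}"
proof -
  have "{a. (a, b) \<in> E} \<subseteq> fst ` E" by force
  then show ?thesis using finite_E by (meson finite_imageI finite_subset)
qed

lemma finite_children: "finite {c. (b, c) \<in> E}"
proof -
  have "{c. (b, c) \<in> E} \<subseteq> snd ` E" by force
  then show ?thesis using finite_E by (meson finite_imageI finite_subset)
qed

lemma root_no_parent: "(a, r) \<notin> E"
  using root_indeg finite_parents unfolding indeg_def by auto

lemma card_parents_le_2: "card {a. (a, b) \<in> E} \<le> 2"
proof (cases "b \<in> V \<and> b \<noteq> r")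
  case True
  then show ?thesis using indeg_nonroot unfolding indeg_def by fastforce
next
  case False
  hence "{a. (a, b) \<in> E} = {}" using edges_in_V root_no_parent by blast
  then show ?thesis by simp
qed

lemma card_children_le_2: "card {c. (b, c) \<in> E} \<le> 2"
proof (cases "b \<in> V")
  case True
  then show ?thesis
    using final_outdeg outdeg_nonfinal unfolding outdeg_def by (cases "b = f") fastforce+
next
  case False
  hence "{c. (b, c) \<in> E} = {}" using edges_in_V by blast
  then show ?thesis by simp
qed

lemma left_child_parents: "(v, l) \<in> F \<Longrightarrow> {a. (a, l) \<in> E} = {v}"
  using fork_children[of v l] card_1_eq_singleton[OF finite_parents] F_sub_E
  unfolding indeg_def by blast

lemma right_child_parents: "(v, l) \<in> F \<Longrightarrow> (v, rc) \<in> C \<Longrightarrow> {a. (a, rc) \<in> E} = {v}"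
  using fork_children[of v l] card_1_eq_singleton[OF finite_parents] C_sub_E C_functional
  unfolding indeg_def by blast

lemma right_child_not_touch: "(v, l) \<in> F \<Longrightarrow> (v, rc) \<in> C \<Longrightarrow> (p, rc) \<notin> T"
  using fork_children[of v l] C_functional by blast

lemma left_child_no_C_parent: "(v, l) \<in> F \<Longrightarrow> (p, l) \<notin> C"
proof
  assume vl: "(v, l) \<in> F" and pl: "(p, l) \<in> C"
  hence "p = v" using left_child_parents[OF vl] C_sub_E by blast
  then show False using vl pl C_F_disjoint by blast
qed

lemma fork_has_right_child: "(v, l) \<in> F \<Longrightarrow> \<exists>rc. (v, rc) \<in> C"
  using fork_children by blast

lemma F_functional: "(u, l) \<in> F \<Longrightarrow> (u, l') \<in> F \<Longrightarrow> l = l'"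
proof (rule ccontr)
  assume ul: "(u, l) \<in> F" "(u, l') \<in> F" "l \<noteq> l'"
  obtain rc where rc: "(u, rc) \<in> C" using fork_has_right_child[OF ul(1)] by blast
  have "l \<noteq> rc" "l' \<noteq> rc" using ul rc C_F_disjoint by blast+
  hence "3 = card {l, l', rc}" using ul(3) by simp
  also have "\<dots> \<le> card {c. (u, c) \<in> E}"
    using ul rc C_sub_E F_sub_E by (intro card_mono[OF finite_children]) blast
  also have "\<dots> \<le> 2" by (rule card_children_le_2)
  finally show False by simp
qed

lemma touch_has_local_parent: "(p, x) \<in> T \<Longrightarrow> \<exists>lp. (lp, x) \<in> C"
proof (rule ccontr)
  assume px: "(p, x) \<in> T" and "\<nexists>lp. (lp, x) \<in> C"
  moreover have "x \<in> V" "x \<noteq> r" using px T_in_V T_sub_E root_no_parent by blast+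
  ultimately obtain v where "(v, x) \<in> F" using thread_start_forked by blast
  then show False using px left_child_parents fork_children T_sub_E by blast
qed

lemma touch_parents: "(p, x) \<in> T \<Longrightarrow> (lp, x) \<in> C \<Longrightarrow> {a. (a, x) \<in> E} = {p, lp}"
proof -
  assume px: "(p, x) \<in> T" and lpx: "(lp, x) \<in> C"
  have sub: "{p, lp} \<subseteq> {a. (a, x) \<in> E}" using px lpx T_sub_E C_sub_E by blast
  have "p \<noteq> lp" using px lpx touch_edge by blast
  hence "card {a. (a, x) \<in> E} \<le> card {p, lp}" using card_parents_le_2[of x] by simp
  then show ?thesis using card_seteq[OF finite_parents sub] by simp
qed

subsection \<open>Threads and the spawn tree\<close>

lemma thread_of_sym: "u \<in> thread_of C v \<longleftrightarrow> v \<in> thread_of C u"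
proof -
  have "sym ((C \<union> C\<inverse>)\<^sup>*)" by (intro sym_rtrancl) (auto simp: sym_def)
  then show ?thesis unfolding thread_of_def by (auto simp: sym_def)
qed

lemma thread_of_trans: "u \<in> thread_of C v \<Longrightarrow> v \<in> thread_of C w \<Longrightarrow> u \<in> thread_of C w"
  unfolding thread_of_def by (meson mem_Collect_eq rtrancl_trans)

lemma rtrancl_C_thread_of: "(a, b) \<in> C\<^sup>* \<Longrightarrow> a \<in> thread_of C b"
proof -
  assume "(a, b) \<in> C\<^sup>*"
  hence "(a, b) \<in> (C \<union> C\<inverse>)\<^sup>*" by (rule rtrancl_mono[THEN subsetD, rotated]) auto
  then show ?thesis unfolding thread_of_def by simp
qed

lemma rtrancl_C_thread_of': "(a, b) \<in> C\<^sup>* \<Longrightarrow> b \<in> thread_of C a"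
  using rtrancl_C_thread_of thread_of_sym by simp

lemma single_valued_C: "single_valued C"
  by (rule single_valuedI) (erule (1) C_functional)

lemma single_valued_converse_C: "single_valued (C\<inverse>)"
  by (rule single_valuedI) (auto intro: C_injective)

lemma thread_of_C_comparable:
  assumes "a \<in> thread_of C b"
  shows "(a, b) \<in> C\<^sup>* \<or> (b, a) \<in> C\<^sup>*"
proof -
  have "(a, b) \<in> (C \<union> C\<inverse>)\<^sup>*" using assms unfolding thread_of_def by blast
  then show ?thesis by (rule rtrancl_sym_closure_comparable[OF single_valued_C single_valued_converse_C])
qed

lemma thread_first_unique:
  "a \<in> thread_of C b \<Longrightarrow> \<nexists>d. (d, a) \<in> C \<Longrightarrow> \<nexists>d. (d, b) \<in> C \<Longrightarrow> a = b"
  using thread_of_C_comparable by (metis rtranclE)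

lemma thread_end_after:
  assumes "(s, y) \<in> C\<^sup>*" "(s, u) \<in> C\<^sup>*" "\<nexists>d. (u, d) \<in> C"
  shows "(y, u) \<in> C\<^sup>*"
proof -
  have "y \<in> thread_of C u"
    using assms(1,2) rtrancl_C_thread_of rtrancl_C_thread_of' thread_of_trans by metis
  hence "(y, u) \<in> C\<^sup>* \<or> (u, y) \<in> C\<^sup>*" by (rule thread_of_C_comparable)
  then show ?thesis using assms(3) by (metis converse_rtranclE rtrancl.rtrancl_refl)
qed

lemma wf_C: "wf C"
  using wf_E C_sub_E wf_subset by blast

lemma thread_start_exists: "\<exists>s. (s, y) \<in> C\<^sup>* \<and> (\<nexists>d. (d, s) \<in> C)"
proof (induction y rule: wf_induct[OF wf_C])
  case (1 y)
  show ?case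
  proof (cases "\<exists>d. (d, y) \<in> C")
    case True
    then obtain d where d: "(d, y) \<in> C" by blast
    then obtain s where "(s, d) \<in> C\<^sup>*" "\<nexists>d. (d, s) \<in> C" using 1 by blast
    then show ?thesis using d by (meson rtrancl.rtrancl_into_rtrancl)
  qed blast
qed

lemma fork_of_thread_unique:
  assumes "(v, l) \<in> F" "(v', l') \<in> F" "l' \<in> thread_of C l"
  shows "v' = v"
proof -
  have "l' = l" using thread_first_unique assms left_child_no_C_parent by metis
  then show ?thesis using assms(1,2) left_child_parents F_sub_E by blast
qed

lemma R_parent_unique: "(a, b) \<in> R \<Longrightarrow> (a', b) \<in> R \<Longrightarrow> a = a'"
proof -
  assume ab: "(a, b) \<in> R" and a'b: "(a', b) \<in> R"
  show ?thesis
  proof (cases "(a, b) \<in> F \<or> (a', b) \<in> F")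
    case True
    then obtain v where "{x. (x, b) \<in> E} = {v}" using left_child_parents by blast
    moreover have "a \<in> {x. (x, b) \<in> E}" "a' \<in> {x. (x, b) \<in> E}" using ab a'b R_sub_E by blast+
    ultimately show ?thesis by auto
  next
    case False
    then show ?thesis using ab a'b C_injective by blast
  qed
qed

lemma R_rtrancl_parent: "(l, b) \<in> R\<^sup>* \<Longrightarrow> b \<noteq> l \<Longrightarrow> (p, b) \<in> R \<Longrightarrow> (l, p) \<in> R\<^sup>*"
  by (metis R_parent_unique rtranclE)

lemma R_no_cycle: "(a, b) \<in> R\<^sup>+ \<Longrightarrow> (b, a) \<in> R\<^sup>* \<Longrightarrow> False"
  using acyclic_R unfolding acyclic_def by (meson rtrancl_trancl_trancl)

lemma spawn_subtree_misses_thread: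
  assumes "(s, y) \<in> C\<^sup>*" "(L, y) \<in> R\<^sup>*" "(s, L) \<in> R\<^sup>+" "\<nexists>d. (d, L) \<in> C"
  shows False
  using assms(1,2)
proof (induction rule: rtrancl_induct)
  case base
  then show ?case using assms(3) R_no_cycle by blast
next
  case (step y z)
  have "L \<noteq> z" using step.hyps(2) assms(4) by blast
  then show ?case using R_rtrancl_parent step by blast
qed

lemma right_child_not_below_left_child:
  assumes "(w, l) \<in> F" "(w, rc) \<in> C" "(l, rc) \<in> R\<^sup>*"
  shows False
proof -
  have "rc \<noteq> l" using assms(1,2) left_child_no_C_parent by blast
  hence "(l, w) \<in> R\<^sup>*" using R_rtrancl_parent assms by blast
  then show False using assms(1) R_no_cycle by blast
qed

lemma edge_entering_left_subtree:
  assumes "(a, b) \<in> E" "(l, b) \<in> R\<^sup>*" "(l, a) \<notin> R\<^sup>*" "(v, l) \<in> F"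
  shows "(a, b) \<in> T \<or> (b = l \<and> (a, b) \<in> F)"
proof (cases "(a, b) \<in> T \<or> b = l")
  case True
  then show ?thesis using assms(1,4) left_child_no_C_parent unfolding edges_def by blast
next
  case False
  then show ?thesis using R_rtrancl_parent assms(1-3) unfolding edges_def by blast
qed

lemma is_touch_of_intro:
  assumes "(v, l) \<in> F" "p \<in> thread_of C l" "(p, x) \<in> T" "(lp, x) \<in> C"
  shows "is_touch_of C T (thread_of C l) x"
proof -
  have "x \<notin> thread_of C p" using touch_edge assms(3) by blast
  hence "x \<notin> thread_of C l" using assms(2) thread_of_trans thread_of_sym by metis
  then show ?thesis unfolding is_touch_of_def using assms by blast
qed

lemma right_unique_seq_step: "right_unique (seq_step C F T)"
proof (rule right_uniqueI)
  fix s s1 s2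
  show "seq_step C F T s s1 \<Longrightarrow> seq_step C F T s s2 \<Longrightarrow> s1 = s2"
  proof (induction rule: seq_step.induct)
    case (fork u l rc es dq)
    from fork.prems show ?case
    proof (cases rule: seq_step.cases)
      case (fork l' rc')
      then show ?thesis using fork.hyps F_functional C_functional by blast
    qed (use fork.hyps in blast)+
  next
    case (cont u c es dq)
    from cont.prems show ?case
      by (cases rule: seq_step.cases) (use cont.hyps in auto)
  next
    case (idle u es dq)
    from idle.prems show ?case
      by (cases rule: seq_step.cases) (use idle.hyps in auto)
  next
    case (pop es dq w)
    from pop.prems show ?case
      by (cases rule: seq_step.cases) auto
  qed
qed

lemma seq_step_stops: "(seq_step C F T)\<^sup>*\<^sup>* (es, None, []) s \<Longrightarrow> s = (es, None, [])"
proof -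
  have "\<not> seq_step C F T (es, None, []) s'" for s' by (auto elim: seq_step.cases)
  then show "(seq_step C F T)\<^sup>*\<^sup>* (es, None, []) s \<Longrightarrow> s = (es, None, [])"
    by (metis converse_rtranclpE)
qed

lemma touch_spawned:
  assumes "(p, x) \<in> T"
  obtains s v rc where "(s, p) \<in> C\<^sup>*" "(v, s) \<in> F" "(v, rc) \<in> C" "p \<in> thread_of C s"
proof -
  obtain s where s: "(s, p) \<in> C\<^sup>*" "\<nexists>d. (d, s) \<in> C" using thread_start_exists by blast
  have "s \<in> V" using s(1) assms T_in_V C_in_V by (metis converse_rtranclE mem_Sigma_iff subsetD)
  moreover have "s \<noteq> r" using s(1) assms touch_edge rtrancl_C_thread_of' by metis
  ultimately obtain v where "(v, s) \<in> F" using thread_start_forked s(2) by blast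
  then show ?thesis using that s(1) fork_has_right_child rtrancl_C_thread_of' by blast
qed

lemma continuation_only_child:
  assumes "(u, c) \<in> C" "\<nexists>l. (u, l) \<in> F"
  shows "{c'. (u, c') \<in> E} = {c}"
proof -
  have "(u, c') \<notin> T" for c' using touch_edge assms(1) by blast
  then show ?thesis using assms C_functional C_sub_E unfolding edges_def by blast
qed

lemma C_rtrancl_R: "(a, b) \<in> C\<^sup>* \<Longrightarrow> (a, b) \<in> R\<^sup>*"
  using rtrancl_mono[of C R] by blast

section \<open>The sequential execution as a depth-first traversal\<close>

definition left_child :: "'v \<Rightarrow> 'v" where
  "left_child w = (SOME l. (w, l) \<in> F)"

definition right_child :: "'v \<Rightarrow> 'v" where
  "right_child w = (SOME c. (w, c) \<in> C)"

lemma left_child_eq: "(w, l) \<in> F \<Longrightarrow> left_child w = l"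
  unfolding left_child_def using F_functional by (metis someI)

lemma right_child_eq: "(w, c) \<in> C \<Longrightarrow> right_child w = c"
  unfolding right_child_def using C_functional by (metis someI)

lemma right_child_of_fork: "(w, left_child w) \<in> F \<Longrightarrow> (w, right_child w) \<in> C"
  using fork_has_right_child right_child_eq by metis

lemma fork_transition:
  assumes "(u, l) \<in> F"
  shows "seq_step C F T (es, Some u, dq) (es @ [u], Some l, dq @ [right_child u])"
  using seq_step.fork[OF assms] right_child_of_fork left_child_eq[OF assms] assms by metis

fun fork_chain :: "'v \<Rightarrow> 'v list \<Rightarrow> bool" where
  "fork_chain p [] = True"
| "fork_chain p (w # ws) \<longleftrightarrow> (p, w) \<in> C\<^sup>* \<and> fork_chain (left_child w) ws"

definition chain_top :: "'v \<Rightarrow> 'v list \<Rightarrow> 'v" where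
  "chain_top p os = (if os = [] then p else left_child (last os))"

lemma chain_top_Cons: "chain_top p (w # ws) = chain_top (left_child w) ws"
  unfolding chain_top_def by simp

lemma fork_chain_snoc:
  "fork_chain p (os @ [w]) \<longleftrightarrow> fork_chain p os \<and> (chain_top p os, w) \<in> C\<^sup>*"
  by (induction os arbitrary: p) (auto simp: chain_top_def)

lemma fork_chain_reaches_top:
  "fork_chain p os \<Longrightarrow> \<forall>w\<in>set os. (w, left_child w) \<in> F \<Longrightarrow> (p, chain_top p os) \<in> R\<^sup>*"
proof (induction os arbitrary: p)
  case Nil
  then show ?case by (simp add: chain_top_def)
next
  case (Cons w ws)
  have "(p, w) \<in> R\<^sup>*" using Cons.prems(1) C_rtrancl_R by simp
  moreover have "(w, left_child w) \<in> R" using Cons.prems(2) by auto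
  moreover have "(left_child w, chain_top (left_child w) ws) \<in> R\<^sup>*" using Cons by auto
  ultimately have "(p, chain_top (left_child w) ws) \<in> R\<^sup>*"
    by (meson rtrancl_into_rtrancl rtrancl_trans)
  then show ?case by (simp add: chain_top_Cons)
qed

lemma fork_chain_left_child_reaches_top:
  "fork_chain p os \<Longrightarrow> \<forall>w\<in>set os. (w, left_child w) \<in> F \<Longrightarrow> w \<in> set os \<Longrightarrow>
   (left_child w, chain_top p os) \<in> R\<^sup>*"
proof (induction os arbitrary: p)
  case (Cons w' ws)
  then show ?case using fork_chain_reaches_top by (cases "w = w'") (auto simp: chain_top_Cons)
qed simp

lemma fork_chain_below_top:
  assumes "fork_chain p os" "\<forall>w\<in>set os. (w, left_child w) \<in> F" "w \<in> set os" "w \<noteq> last os"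
  shows "(left_child w, left_child (last os)) \<in> R\<^sup>+"
proof -
  have ne: "os \<noteq> []" using assms(3) by auto
  hence os: "os = butlast os @ [last os]" by simp
  hence w: "w \<in> set (butlast os)" using assms(3,4)
    by (metis Un_iff empty_iff empty_set insert_iff list.set(2) set_append)
  have chain: "fork_chain p (butlast os)" "(chain_top p (butlast os), last os) \<in> C\<^sup>*"
    using assms(1) fork_chain_snoc os by metis+
  have "(left_child w, chain_top p (butlast os)) \<in> R\<^sup>*"
    using fork_chain_left_child_reaches_top[OF chain(1) _ w] assms(2) by (auto dest: in_set_butlastD)
  moreover have "(chain_top p (butlast os), last os) \<in> R\<^sup>*" using chain(2) C_rtrancl_R by blast
  moreover have "(last os, left_child (last os)) \<in> R" using assms(2) ne by simp
  ultimately show ?thesis by (meson rtrancl_into_trancl1 rtrancl_trans)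
qed

definition joins :: "'v \<Rightarrow> 'v \<Rightarrow> bool" where
  "joins fp rc \<longleftrightarrow> (\<exists>v l x. (v, l) \<in> F \<and> (v, rc) \<in> C \<and> fp \<in> thread_of C l \<and> (fp, x) \<in> T)"

definition right_child_follows :: "'v list \<Rightarrow> bool" where
  "right_child_follows es \<longleftrightarrow>
     (\<forall>i rc. Suc i < length es \<longrightarrow> joins (es ! i) rc \<longrightarrow> es ! Suc i = rc)"

definition right_child_next :: "'v list \<Rightarrow> 'v \<Rightarrow> bool" where
  "right_child_next es u \<longleftrightarrow> (\<forall>rc. es \<noteq> [] \<longrightarrow> joins (last es) rc \<longrightarrow> u = rc)"

definition future_parents_precede :: "'v list \<Rightarrow> bool" where
  "future_parents_precede es \<longleftrightarrow>
     (\<forall>j<length es. \<forall>x p. (es ! j, x) \<in> C \<longrightarrow> (p, x) \<in> T \<longrightarrow> p \<in> set (take j es))"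

lemma right_child_follows_snoc:
  assumes "right_child_follows es" "right_child_next es u"
  shows "right_child_follows (es @ [u])"
  unfolding right_child_follows_def
proof (intro allI impI)
  fix i rc
  assume i: "Suc i < length (es @ [u])" and joins: "joins ((es @ [u]) ! i) rc"
  show "(es @ [u]) ! Suc i = rc"
  proof (cases "Suc i < length es")
    case True
    then show ?thesis using assms(1) i joins unfolding right_child_follows_def by (simp add: nth_append)
  next
    case False
    hence si: "Suc i = length es" using i by simp
    hence ne: "es \<noteq> []" by auto
    have "last es = es ! i" using si ne by (metis diff_Suc_1 last_conv_nth)
    hence "(es @ [u]) ! i = last es" using si by (simp add: nth_append)
    then show ?thesis using assms(2) joins si ne unfolding right_child_next_def by (simp add: nth_append)
  qed
qed

lemma right_child_next_no_touch: "\<forall>x. (u, x) \<notin> T \<Longrightarrow> right_child_next (es @ [u]) u'"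
  unfolding right_child_next_def joins_def by auto

lemma future_parents_precede_snoc:
  assumes "future_parents_precede es" "\<And>x p. (u, x) \<in> C \<Longrightarrow> (p, x) \<in> T \<Longrightarrow> p \<in> set es"
  shows "future_parents_precede (es @ [u])"
  using assms unfolding future_parents_precede_def
  by (auto simp: nth_append less_Suc_eq)

text \<open>Invariant of the sequential execution in state (es, Some u, map right_child os):
os lists the open forks, those whose right child waits in the deque, each lying on the thread
spawned by its predecessor, with u on the thread spawned by the last one. No unexecuted edge
enters the unexecuted part of the spawn subtree of an open fork from outside. The last three
conjuncts record the two claims of the theorem for the nodes executed so far.\<close>
definition dfs_inv :: "'v list \<Rightarrow> 'v \<Rightarrow> 'v list \<Rightarrow> bool" where
  "dfs_inv es u os \<longleftrightarrow>
     u \<in> V \<and> set es \<subseteq> V \<and> u \<notin> set es \<and> (\<forall>a. (a, u) \<in> E \<longrightarrow> a \<in> set es) \<and>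
     (\<forall>a b. (a, b) \<in> E \<longrightarrow> b \<in> set es \<longrightarrow> a \<in> set es) \<and>
     set os \<subseteq> set es \<and> distinct os \<and> (\<forall>w\<in>set os. (w, left_child w) \<in> F) \<and>
     fork_chain r os \<and> (chain_top r os, u) \<in> C\<^sup>* \<and>
     (\<forall>w\<in>set es. (\<exists>l. (w, l) \<in> F) \<longrightarrow> w \<notin> set os \<longrightarrow>
        (\<forall>y. (left_child w, y) \<in> C\<^sup>* \<longrightarrow> y \<in> set es)) \<and>
     (\<forall>w\<in>set os. \<forall>a b. (a, b) \<in> E \<longrightarrow> a \<notin> set es \<longrightarrow> b \<notin> set es \<longrightarrow>
        (left_child w, b) \<in> R\<^sup>* \<longrightarrow> (left_child w, a) \<in> R\<^sup>*) \<and>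
     (\<forall>w\<in>set os. right_child w \<notin> set es \<and> right_child w \<noteq> u) \<and>
     (\<forall>y\<in>V. y \<notin> set es \<longrightarrow> y \<noteq> u \<longrightarrow> (\<forall>a. (a, y) \<in> E \<longrightarrow> a \<in> set es) \<longrightarrow>
        y \<in> right_child ` set os) \<and>
     right_child_follows es \<and> right_child_next es u \<and> future_parents_precede es"

definition complete_run :: "'v list \<Rightarrow> bool" where
  "complete_run es \<longleftrightarrow> V \<subseteq> set es \<and> right_child_follows es \<and> future_parents_precede es \<and>
     es \<noteq> [] \<and> (\<forall>x. (last es, x) \<notin> T)"

lemma complete_run_future_parent_first:
  assumes "complete_run es" "(fp, x) \<in> T" "(lp, x) \<in> C"
  shows "\<exists>i j. i < j \<and> j < length es \<and> es ! i = fp \<and> es ! j = lp"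
proof -
  have "lp \<in> set es" using assms(1,3) C_in_V unfolding complete_run_def by blast
  then obtain j where j: "j < length es" "es ! j = lp" by (metis in_set_conv_nth)
  have "fp \<in> set (take j es)"
    using assms j unfolding complete_run_def future_parents_precede_def by blast
  then obtain i where "i < length (take j es)" "take j es ! i = fp" by (metis in_set_conv_nth)
  then show ?thesis using j by auto
qed

lemma complete_run_right_child_next:
  assumes "complete_run es" "(v, l) \<in> F" "(v, rc) \<in> C" "fp \<in> thread_of C l" "(fp, x) \<in> T"
  shows "\<exists>i. Suc i < length es \<and> es ! i = fp \<and> es ! Suc i = rc"
proof -
  have "fp \<in> set es" using assms(1,5) T_in_V unfolding complete_run_def by blast
  then obtain k where k: "k < length es" "es ! k = fp" by (metis in_set_conv_nth)
  have "last es \<noteq> fp" using assms(1,5) unfolding complete_run_def by blast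
  hence "Suc k < length es" using k by (metis Suc_lessI diff_Suc_1 last_conv_nth list.size(3) not_less0)
  moreover have "joins fp rc" using assms(2-5) unfolding joins_def by blast
  ultimately show ?thesis using assms(1) k unfolding complete_run_def right_child_follows_def by blast
qed

end

locale single_touch_computation = future_computation +
  assumes single_touch: "structured_single_touch C F T"
begin

lemma
  assumes "(v, l) \<in> F" "(v, rc) \<in> C" "p \<in> thread_of C l" "(p, x) \<in> T" "(lp, x) \<in> C"
  shows local_parent_below_fork: "(v, lp) \<in> E\<^sup>*"
    and touch_below_right_child: "(rc, x) \<in> E\<^sup>*"
proof -
  have touch: "is_touch_of C T (thread_of C l) x" using is_touch_of_intro assms by blast
  show "(v, lp) \<in> E\<^sup>*" using single_touch touch assms(1,2,5)
    unfolding structured_single_touch_def structured_def by blast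
  show "(rc, x) \<in> E\<^sup>*" using single_touch touch assms(1,2)
    unfolding structured_single_touch_def by blast
qed

end

section \<open>Preservation of the invariant\<close>

locale dfs_state = single_touch_computation +
  fixes es u os
  assumes invariant: "dfs_inv es u os"
begin

lemma
  shows current_in_V: "u \<in> V"
    and executed_in_V: "set es \<subseteq> V"
    and current_not_executed: "u \<notin> set es"
    and current_ready[rule_format]: "\<forall>a. (a, u) \<in> E \<longrightarrow> a \<in> set es"
    and executed_closed[rule_format]: "\<forall>a b. (a, b) \<in> E \<longrightarrow> b \<in> set es \<longrightarrow> a \<in> set es"
    and open_executed: "set os \<subseteq> set es"
    and open_distinct: "distinct os"
    and open_fork[rule_format]: "\<forall>w\<in>set os. (w, left_child w) \<in> F"
    and open_chain: "fork_chain r os"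
    and current_on_top: "(chain_top r os, u) \<in> C\<^sup>*"
    and closed_fork_finished[rule_format]: "\<forall>w\<in>set es. (\<exists>l. (w, l) \<in> F) \<longrightarrow> w \<notin> set os \<longrightarrow>
       (\<forall>y. (left_child w, y) \<in> C\<^sup>* \<longrightarrow> y \<in> set es)"
    and open_subtree_entry[rule_format]: "\<forall>w\<in>set os. \<forall>a b. (a, b) \<in> E \<longrightarrow> a \<notin> set es \<longrightarrow>
       b \<notin> set es \<longrightarrow> (left_child w, b) \<in> R\<^sup>* \<longrightarrow> (left_child w, a) \<in> R\<^sup>*"
    and open_right_child: "\<forall>w\<in>set os. right_child w \<notin> set es \<and> right_child w \<noteq> u"
    and ready_in_deque[rule_format]: "\<forall>y\<in>V. y \<notin> set es \<longrightarrow> y \<noteq> u \<longrightarrow>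
       (\<forall>a. (a, y) \<in> E \<longrightarrow> a \<in> set es) \<longrightarrow> y \<in> right_child ` set os"
    and history_follows: "right_child_follows es"
    and history_next: "right_child_next es u"
    and history_precede: "future_parents_precede es"
  by (insert invariant[unfolded dfs_inv_def], elim conjE, assumption)+

lemma
  assumes "w \<in> set os"
  shows open_right_child_pending: "right_child w \<notin> set es"
    and open_right_child_not_current: "right_child w \<noteq> u"
  using open_right_child assms by blast+

lemma executed_closed_rtrancl:
  assumes "(a, b) \<in> E\<^sup>*" "b \<in> set es"
  shows "a \<in> set es"
  by (rule rtrancl_backward_closed[OF assms]) (rule executed_closed)

lemma executed_closed_snoc: "(a, b) \<in> E \<Longrightarrow> b \<in> set (es @ [u]) \<Longrightarrow> a \<in> set (es @ [u])"
  using current_ready executed_closed by auto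

lemma descendant_unexecuted:
  assumes "(v, y) \<in> E\<^sup>*" "v \<notin> set (es @ [u])"
  shows "y \<notin> set (es @ [u])"
  using rtrancl_backward_closed[OF assms(1)] executed_closed_snoc assms(2) by blast

lemma child_unexecuted: "(u, c) \<in> E \<Longrightarrow> c \<notin> set (es @ [u])"
  using edge_irrefl current_not_executed executed_closed by fastforce

lemma top_on_open_thread: "os \<noteq> [] \<Longrightarrow> (left_child (last os), u) \<in> C\<^sup>*"
  using current_on_top unfolding chain_top_def by simp

lemma open_subtree_path:
  assumes "w \<in> set os" "(c, b) \<in> E\<^sup>*" "c \<notin> set es" "(left_child w, b) \<in> R\<^sup>*"
  shows "(left_child w, c) \<in> R\<^sup>*"
  using assms(2-4)
proof (induction rule: converse_rtrancl_induct)
  case (step c c')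
  have "c' \<notin> set es" using step.prems(1) step.hyps(1) executed_closed by blast
  then show ?case using step open_subtree_entry[OF assms(1) step.hyps(1)] by blast
qed

text \<open>A pending touch edge into the unexecuted part of the current spawn subtree cannot
come from a thread whose fork has been executed. That fork would be open; if it is not the
last open fork, the touching thread lies above the current subtree, and if it is, the touch
descends from its pending right child, which lies outside the subtree.\<close>
lemma pending_touch_from_executed_fork:
  assumes fork: "(v, s) \<in> F" "(v, rc) \<in> C" and sa: "(s, a) \<in> C\<^sup>*"
    and ab: "(a, b) \<in> T" "(rc, b) \<in> E\<^sup>*"
    and exec: "v \<in> set es" "a \<notin> set es" "b \<notin> set es"
    and below_top: "(chain_top r os, b) \<in> R\<^sup>*"
  shows False
proof -
  have lv: "left_child v = s" using fork(1) left_child_eq by blast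
  have v_open: "v \<in> set os"
    using closed_fork_finished[OF exec(1) _ _, of a] fork(1) lv sa exec(2) by blast
  hence ne: "os \<noteq> []" by auto
  define w where "w = last os"
  have w_open: "w \<in> set os" using ne w_def by simp
  have wb: "(left_child w, b) \<in> R\<^sup>*" using below_top ne w_def by (simp add: chain_top_def)
  show False
  proof (cases "v = w")
    case True
    hence "right_child w = rc" using fork(2) right_child_eq by simp
    hence "(left_child w, rc) \<in> R\<^sup>*"
      using open_subtree_path[OF w_open ab(2) _ wb] open_right_child_pending[OF w_open] by simp
    then show False
      using right_child_not_below_left_child[OF open_fork[OF w_open]]
        right_child_of_fork[OF open_fork[OF w_open]] \<open>right_child w = rc\<close> by blast
  next
    case False
    have "(s, left_child w) \<in> R\<^sup>+"
      using fork_chain_below_top[OF open_chain _ v_open] open_fork False lv w_def by blast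
    moreover have "(left_child w, a) \<in> R\<^sup>*"
      using open_subtree_entry[OF w_open _ exec(2,3) wb] ab(1) T_sub_E by blast
    moreover have "\<nexists>d. (d, left_child w) \<in> C"
      using left_child_no_C_parent open_fork[OF w_open] by blast
    ultimately show False using spawn_subtree_misses_thread[OF sa] by blast
  qed
qed

lemma touch_parent_executed:
  assumes uc: "(u, c) \<in> C" and pc: "(p, c) \<in> T"
  shows "p \<in> set es"
proof (rule ccontr)
  assume p_pending: "p \<notin> set es"
  obtain s v rc where sv: "(s, p) \<in> C\<^sup>*" "(v, s) \<in> F" "(v, rc) \<in> C" "p \<in> thread_of C s"
    using touch_spawned[OF pc] .
  have "v \<in> set es"
  proof (cases "v = u")
    case True
    hence "rc = c" using sv(3) uc C_functional by blast
    then show ?thesis using right_child_not_touch[OF sv(2,3)] pc by blast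
  next
    case False
    then obtain q where "(v, q) \<in> E\<^sup>*" "(q, u) \<in> E"
      using local_parent_below_fork[OF sv(2,3,4) pc uc] by (metis rtranclE)
    then show ?thesis using current_ready executed_closed_rtrancl by blast
  qed
  moreover have "c \<notin> set es" using uc C_sub_E executed_closed current_not_executed by blast
  moreover have "(chain_top r os, c) \<in> R\<^sup>*"
    using current_on_top uc C_rtrancl_R by (meson UnCI rtrancl.rtrancl_into_rtrancl)
  ultimately show False
    using pending_touch_from_executed_fork[OF sv(2,3,1) pc touch_below_right_child[OF sv(2,3,4) pc uc]]
      p_pending by blast
qed

lemma new_fork_subtree_entry:
  assumes ul: "(u, lu) \<in> F"
  shows "(a, b) \<in> E \<Longrightarrow> a \<notin> set (es @ [u]) \<Longrightarrow> b \<notin> set (es @ [u]) \<Longrightarrow> (lu, b) \<in> R\<^sup>* \<Longrightarrow>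
    (lu, a) \<in> R\<^sup>*"
proof (induction b arbitrary: a rule: wf_induct_rule[OF wf_trancl[OF wf_E], case_names less])
  case (less b a)
  show ?case
  proof (rule ccontr)
    assume not_below: "(lu, a) \<notin> R\<^sup>*"
    have "(a, b) \<in> T \<or> (b = lu \<and> (a, b) \<in> F)"
      using edge_entering_left_subtree[OF less.prems(1,4) not_below ul] .
    moreover have "a \<noteq> u" using less.prems(2) by simp
    ultimately have ab: "(a, b) \<in> T" using left_child_parents[OF ul] F_sub_E by blast
    obtain s v rc where sv: "(s, a) \<in> C\<^sup>*" "(v, s) \<in> F" "(v, rc) \<in> C" "a \<in> thread_of C s"
      using touch_spawned[OF ab] .
    obtain lp where lp: "(lp, b) \<in> C" using touch_has_local_parent[OF ab] by blast
    have sa: "(s, a) \<in> R\<^sup>*" using sv(1) C_rtrancl_R by blast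
    consider (current) "v = u" | (executed) "v \<in> set es" | (pending) "v \<notin> set (es @ [u])" by auto
    then show False
    proof cases
      case current
      then show False using F_functional ul sv(2) sa not_below by blast
    next
      case executed
      have "(chain_top r os, lu) \<in> R\<^sup>*"
        using current_on_top ul C_rtrancl_R by (meson UnCI rtrancl.rtrancl_into_rtrancl)
      hence "(chain_top r os, b) \<in> R\<^sup>*" using less.prems(4) by simp
      then show False
        using pending_touch_from_executed_fork[OF sv(2,3,1) ab touch_below_right_child[OF sv(2,3,4) ab lp] executed]
          less.prems(2,3) by simp
    next
      case pending
      txt \<open>The path from v to the local parent of b enters the subtree of lu through an
        edge strictly above b, to which the induction hypothesis applies.\<close>
      have "b \<noteq> lu" using lp left_child_no_C_parent[OF ul] by blast
      hence "(lu, lp) \<in> R\<^sup>*" using R_rtrancl_parent less.prems(4) lp by blast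
      moreover have "(lu, v) \<notin> R\<^sup>*"
        using sv(2) sa not_below by (meson UnCI rtrancl.rtrancl_into_rtrancl rtrancl_trans)
      ultimately obtain a' b' where ab': "(v, a') \<in> E\<^sup>*" "(a', b') \<in> E" "(b', lp) \<in> E\<^sup>*"
          "(lu, a') \<notin> R\<^sup>*" "(lu, b') \<in> R\<^sup>*"
        using rtrancl_crossing_edge[OF local_parent_below_fork[OF sv(2,3,4) ab lp], of "\<lambda>y. (lu, y) \<in> R\<^sup>*"]
        by blast
      have "a' \<notin> set (es @ [u])" "b' \<notin> set (es @ [u])"
        using descendant_unexecuted pending ab'(1,2) by (blast intro: rtrancl_into_rtrancl)+
      moreover have "(b', b) \<in> E\<^sup>+" using ab'(3) lp C_sub_E by (meson rtrancl_into_trancl1 subsetD)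
      ultimately have "(lu, a') \<in> R\<^sup>*" using less.IH ab'(2,5) by blast
      then show False using ab'(4) by blast
    qed
  qed
qed

lemma fork_right_children_pending:
  assumes ul: "(u, l) \<in> F"
  shows "\<forall>w\<in>set (os @ [u]). right_child w \<notin> set (es @ [u]) \<and> right_child w \<noteq> l"
proof
  have urc: "(u, right_child u) \<in> C" using right_child_of_fork ul left_child_eq by metis
  fix w assume "w \<in> set (os @ [u])"
  then consider (old) "w \<in> set os" | (new) "w = u" by auto
  then show "right_child w \<notin> set (es @ [u]) \<and> right_child w \<noteq> l"
  proof cases
    case old
    have "right_child w \<noteq> l"
    proof
      assume "right_child w = l"
      moreover have "(w, right_child w) \<in> C" using right_child_of_fork open_fork old by blast
      ultimately have "w = u" using left_child_parents[OF ul] C_sub_E by blast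
      then show False using old open_executed current_not_executed by blast
    qed
    then show ?thesis using open_right_child_pending[OF old] open_right_child_not_current[OF old] by simp
  next
    case new
    have "right_child u \<noteq> l" using urc ul C_F_disjoint by blast
    then show ?thesis using child_unexecuted urc C_sub_E new by blast
  qed
qed

lemma fork_ready_in_deque:
  assumes ul: "(u, l) \<in> F" and y: "y \<in> V" "y \<notin> set (es @ [u])" "y \<noteq> l"
    "\<forall>a. (a, y) \<in> E \<longrightarrow> a \<in> set (es @ [u])"
  shows "y \<in> right_child ` set (os @ [u])"
proof (cases "(u, y) \<in> E")
  case True
  have urc: "(u, right_child u) \<in> C" using right_child_of_fork ul left_child_eq by metis
  have "(u, y) \<notin> T" using touch_edge urc by blast
  moreover have "(u, y) \<notin> F" using F_functional ul y(3) by blast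
  ultimately have "y = right_child u" using True urc C_functional unfolding edges_def by blast
  then show ?thesis by simp
next
  case False
  hence "\<forall>a. (a, y) \<in> E \<longrightarrow> a \<in> set es" using y(4) by auto
  then show ?thesis using ready_in_deque y(1,2) by auto
qed

lemma fork_invariant:
  assumes ul: "(u, l) \<in> F"
  shows "dfs_inv (es @ [u]) l (os @ [u])"
  unfolding dfs_inv_def
proof (intro conjI)
  have lu: "left_child u = l" using left_child_eq ul .
  have urc: "(u, right_child u) \<in> C" using right_child_of_fork ul lu by simp
  show "l \<in> V" using ul F_in_V by blast
  show "set (es @ [u]) \<subseteq> V" using current_in_V executed_in_V by simp
  show "l \<notin> set (es @ [u])" using child_unexecuted ul F_sub_E by blast
  show "\<forall>a. (a, l) \<in> E \<longrightarrow> a \<in> set (es @ [u])" using left_child_parents[OF ul] by auto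
  show "\<forall>a b. (a, b) \<in> E \<longrightarrow> b \<in> set (es @ [u]) \<longrightarrow> a \<in> set (es @ [u])"
    using executed_closed_snoc by blast
  show "set (os @ [u]) \<subseteq> set (es @ [u])" using open_executed by auto
  show "distinct (os @ [u])" using open_executed open_distinct current_not_executed by auto
  show "\<forall>w\<in>set (os @ [u]). (w, left_child w) \<in> F" using open_fork ul lu by auto
  show "fork_chain r (os @ [u])" using fork_chain_snoc open_chain current_on_top by blast
  show "(chain_top r (os @ [u]), l) \<in> C\<^sup>*" by (simp add: chain_top_def lu)
  show "\<forall>w\<in>set (es @ [u]). (\<exists>l. (w, l) \<in> F) \<longrightarrow> w \<notin> set (os @ [u]) \<longrightarrow>
      (\<forall>y. (left_child w, y) \<in> C\<^sup>* \<longrightarrow> y \<in> set (es @ [u]))"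
    using closed_fork_finished by auto
  have new_open: "w \<in> set (os @ [u]) \<longleftrightarrow> w \<in> set os \<or> w = u" for w by auto
  show "\<forall>w\<in>set (os @ [u]). \<forall>a b. (a, b) \<in> E \<longrightarrow> a \<notin> set (es @ [u]) \<longrightarrow> b \<notin> set (es @ [u]) \<longrightarrow>
      (left_child w, b) \<in> R\<^sup>* \<longrightarrow> (left_child w, a) \<in> R\<^sup>*"
    using open_subtree_entry new_fork_subtree_entry[OF ul] lu new_open by auto
  show "\<forall>w\<in>set (os @ [u]). right_child w \<notin> set (es @ [u]) \<and> right_child w \<noteq> l"
    using fork_right_children_pending[OF ul] .
  show "\<forall>y\<in>V. y \<notin> set (es @ [u]) \<longrightarrow> y \<noteq> l \<longrightarrow> (\<forall>a. (a, y) \<in> E \<longrightarrow> a \<in> set (es @ [u])) \<longrightarrow>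
      y \<in> right_child ` set (os @ [u])"
    using fork_ready_in_deque[OF ul] by blast
  show "right_child_follows (es @ [u])" using right_child_follows_snoc history_follows history_next by blast
  show "right_child_next (es @ [u]) l" using right_child_next_no_touch touch_edge urc by blast
  show "future_parents_precede (es @ [u])"
    using future_parents_precede_snoc[OF history_precede] C_functional urc right_child_not_touch[OF ul]
    by metis
qed

lemma continuation_child_ready:
  assumes "(u, c) \<in> C" "(a, c) \<in> E"
  shows "a \<in> set (es @ [u])"
proof -
  have "(a, c) \<notin> F" using left_child_no_C_parent assms(1) by blast
  moreover have "(a, c) \<in> C \<Longrightarrow> a = u" using assms(1) C_injective by blast
  moreover have "(a, c) \<in> T \<Longrightarrow> a \<in> set es" using touch_parent_executed assms(1) by blast
  ultimately show ?thesis using assms(2) unfolding edges_def by auto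
qed

lemma continue_transition:
  assumes uc: "(u, c) \<in> C" and nf: "\<nexists>l. (u, l) \<in> F"
  shows "seq_step C F T (es, Some u, map right_child os) (es @ [u], Some c, map right_child os)"
  by (rule seq_step.cont[OF nf continuation_only_child[OF uc nf]])
    (use continuation_child_ready[OF uc] in \<open>auto simp: ready_def\<close>)

lemma continue_invariant:
  assumes uc: "(u, c) \<in> C" and nf: "\<nexists>l. (u, l) \<in> F"
  shows "dfs_inv (es @ [u]) c os"
  unfolding dfs_inv_def
proof (intro conjI)
  have out: "{c'. (u, c') \<in> E} = {c}" using continuation_only_child uc nf by blast
  show "c \<in> V" using uc C_in_V by blast
  show "set (es @ [u]) \<subseteq> V" using current_in_V executed_in_V by simp
  show "c \<notin> set (es @ [u])" using child_unexecuted uc C_sub_E by blast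
  show "\<forall>a. (a, c) \<in> E \<longrightarrow> a \<in> set (es @ [u])" using continuation_child_ready[OF uc] by blast
  show "\<forall>a b. (a, b) \<in> E \<longrightarrow> b \<in> set (es @ [u]) \<longrightarrow> a \<in> set (es @ [u])"
    using executed_closed_snoc by blast
  show "set os \<subseteq> set (es @ [u])" using open_executed by auto
  show "distinct os" using open_distinct .
  show "\<forall>w\<in>set os. (w, left_child w) \<in> F" using open_fork by blast
  show "fork_chain r os" using open_chain .
  show "(chain_top r os, c) \<in> C\<^sup>*" using current_on_top uc by (meson rtrancl.rtrancl_into_rtrancl)
  show "\<forall>w\<in>set (es @ [u]). (\<exists>l. (w, l) \<in> F) \<longrightarrow> w \<notin> set os \<longrightarrow>
      (\<forall>y. (left_child w, y) \<in> C\<^sup>* \<longrightarrow> y \<in> set (es @ [u]))"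
    using closed_fork_finished nf by auto
  show "\<forall>w\<in>set os. \<forall>a b. (a, b) \<in> E \<longrightarrow> a \<notin> set (es @ [u]) \<longrightarrow> b \<notin> set (es @ [u]) \<longrightarrow>
      (left_child w, b) \<in> R\<^sup>* \<longrightarrow> (left_child w, a) \<in> R\<^sup>*"
    using open_subtree_entry by simp
  show "\<forall>w\<in>set os. right_child w \<notin> set (es @ [u]) \<and> right_child w \<noteq> c"
  proof
    fix w assume w: "w \<in> set os"
    have "right_child w \<noteq> c"
      using right_child_of_fork[OF open_fork[OF w]] uc C_injective w open_executed current_not_executed
      by blast
    then show "right_child w \<notin> set (es @ [u]) \<and> right_child w \<noteq> c"
      using open_right_child_pending[OF w] open_right_child_not_current[OF w] by simp
  qed
  show "\<forall>y\<in>V. y \<notin> set (es @ [u]) \<longrightarrow> y \<noteq> c \<longrightarrow> (\<forall>a. (a, y) \<in> E \<longrightarrow> a \<in> set (es @ [u])) \<longrightarrow>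
      y \<in> right_child ` set os"
  proof (intro ballI impI)
    fix y assume y: "y \<in> V" "y \<notin> set (es @ [u])" "y \<noteq> c" "\<forall>a. (a, y) \<in> E \<longrightarrow> a \<in> set (es @ [u])"
    have "(u, y) \<notin> E" using out y(3) by blast
    hence "\<forall>a. (a, y) \<in> E \<longrightarrow> a \<in> set es" using y(4) by auto
    then show "y \<in> right_child ` set os" using ready_in_deque y(1,2) by simp
  qed
  show "right_child_follows (es @ [u])" using right_child_follows_snoc history_follows history_next by blast
  show "right_child_next (es @ [u]) c" using right_child_next_no_touch touch_edge uc by blast
  show "future_parents_precede (es @ [u])"
    using future_parents_precede_snoc[OF history_precede] touch_parent_executed uc C_functional by blast
qed

lemma top_thread_finished:
  assumes "\<nexists>d. (u, d) \<in> C" "os \<noteq> []" "(left_child (last os), y) \<in> C\<^sup>*"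
  shows "y \<in> set (es @ [u])"
proof -
  have "(y, u) \<in> C\<^sup>*" using thread_end_after assms top_on_open_thread by blast
  then show ?thesis
  proof (cases rule: rtranclE)
    case (step q)
    hence "(y, q) \<in> E\<^sup>*" using C_sub_E rtrancl_mono by blast
    then show ?thesis using step current_ready executed_closed_rtrancl C_sub_E by auto
  qed simp
qed

lemma open_empty_iff_main_thread: "os = [] \<longleftrightarrow> u \<in> thread_of C r"
proof
  show "os = [] \<Longrightarrow> u \<in> thread_of C r"
    using current_on_top rtrancl_C_thread_of' unfolding chain_top_def by simp
next
  assume main: "u \<in> thread_of C r"
  show "os = []"
  proof (rule ccontr)
    assume ne: "os \<noteq> []"
    have fork: "(last os, left_child (last os)) \<in> F" using open_fork ne by simp
    have "left_child (last os) \<in> thread_of C r"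
      using top_on_open_thread[OF ne] main rtrancl_C_thread_of thread_of_trans by blast
    moreover have "\<nexists>d. (d, r) \<in> C" using root_no_parent C_sub_E by blast
    ultimately have "left_child (last os) = r"
      using thread_first_unique left_child_no_C_parent[OF fork] by blast
    then show False using fork root_no_parent F_sub_E by auto
  qed
qed

lemma thread_end_blocked:
  assumes "\<nexists>d. (u, d) \<in> C" "u \<notin> thread_of C r"
  obtains x lp where "{c. (u, c) \<in> E} = {x}" "(u, x) \<in> T" "(lp, x) \<in> C" "lp \<notin> set (es @ [u])"
proof -
  obtain x where ux: "(u, x) \<in> T" "outdeg E u = 1"
    using thread_end_touches current_in_V assms by blast
  have out: "{c. (u, c) \<in> E} = {x}"
    using card_1_eq_singleton[OF finite_children] ux T_sub_E unfolding outdeg_def by blast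
  have "os \<noteq> []" using open_empty_iff_main_thread assms(2) by blast
  define w where "w = last os"
  have w_open: "w \<in> set os" using \<open>os \<noteq> []\<close> w_def by simp
  have wl: "(w, left_child w) \<in> F" and wrc: "(w, right_child w) \<in> C"
    using open_fork[OF w_open] right_child_of_fork by blast+
  have "u \<in> thread_of C (left_child w)"
    using top_on_open_thread \<open>os \<noteq> []\<close> w_def rtrancl_C_thread_of' by blast
  moreover obtain lp where lp: "(lp, x) \<in> C" using touch_has_local_parent ux(1) by blast
  ultimately have rc_x: "(right_child w, x) \<in> E\<^sup>*"
    using touch_below_right_child[OF wl wrc _ ux(1)] by blast
  have "lp \<notin> set (es @ [u])"
  proof
    assume lp_done: "lp \<in> set (es @ [u])"
    have "right_child w \<noteq> x" using right_child_not_touch[OF wl wrc] ux(1) by blast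
    then obtain q where q: "(right_child w, q) \<in> E\<^sup>*" "(q, x) \<in> E" using rc_x by (metis rtranclE)
    have "q \<in> {u, lp}" using touch_parents[OF ux(1) lp] q(2) by blast
    hence "q \<in> set (es @ [u])" using lp_done by auto
    hence "right_child w \<in> set (es @ [u])" using descendant_unexecuted[OF q(1)] by blast
    then show False
      using open_right_child_pending[OF w_open] open_right_child_not_current[OF w_open] by simp
  qed
  then show ?thesis using that out ux(1) lp by blast
qed

lemma thread_end_child_not_ready:
  assumes "\<nexists>d. (u, d) \<in> C" "u \<notin> thread_of C r" "(u, y) \<in> E"
  shows "\<not> ready E (es @ [u]) y"
proof -
  obtain x lp where out: "{c. (u, c) \<in> E} = {x}" and lp: "(lp, x) \<in> C" "lp \<notin> set (es @ [u])"
    using thread_end_blocked[OF assms(1,2)] by blast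
  have "y = x" using out assms(3) by blast
  moreover have "(lp, x) \<in> E" using lp(1) C_sub_E by blast
  ultimately show ?thesis using lp(2) unfolding ready_def by blast
qed

lemma thread_end_transition:
  assumes nc: "\<nexists>d. (u, d) \<in> C" and nm: "u \<notin> thread_of C r"
  shows "(seq_step C F T)\<^sup>+\<^sup>+ (es, Some u, map right_child os)
           (es @ [u], Some (right_child (last os)), map right_child (butlast os))"
proof -
  have nf: "\<nexists>l. (u, l) \<in> F" using fork_has_right_child nc by blast
  have "seq_step C F T (es, Some u, map right_child os) (es @ [u], None, map right_child os)"
    using seq_step.idle[OF nf] thread_end_child_not_ready[OF nc nm] by blast
  moreover have "os \<noteq> []" using open_empty_iff_main_thread nm by blast
  hence "map right_child os = map right_child (butlast os) @ [right_child (last os)]"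
    by (metis append_butlast_last_id map_append list.simps(8,9))
  hence "seq_step C F T (es @ [u], None, map right_child os)
           (es @ [u], Some (right_child (last os)), map right_child (butlast os))"
    using seq_step.pop by metis
  ultimately show ?thesis by auto
qed

text \<open>The thread ending at u was spawned by the last open fork, whose right child is thus
the node to be executed after u.\<close>
lemma thread_end_returns:
  assumes "\<nexists>d. (u, d) \<in> C" "u \<notin> thread_of C r"
  shows "right_child_next (es @ [u]) (right_child (last os))"
  unfolding right_child_next_def joins_def
proof (intro allI impI, elim exE conjE)
  fix rc v l x
  assume fork: "(v, l) \<in> F" "(v, rc) \<in> C" and "last (es @ [u]) \<in> thread_of C l"
  have ne: "os \<noteq> []" using open_empty_iff_main_thread assms(2) by blast
  hence "u \<in> thread_of C (left_child (last os))" using top_on_open_thread rtrancl_C_thread_of' by blast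
  hence "l \<in> thread_of C (left_child (last os))"
    using \<open>last (es @ [u]) \<in> thread_of C l\<close> thread_of_sym thread_of_trans by (metis last_snoc)
  hence "v = last os" using fork_of_thread_unique[OF open_fork fork(1)] ne by simp
  then show "right_child (last os) = rc" using fork(2) right_child_eq by simp
qed

lemma thread_end_ready_in_deque:
  assumes nc: "\<nexists>d. (u, d) \<in> C" and nm: "u \<notin> thread_of C r"
    and y: "y \<in> V" "y \<notin> set (es @ [u])" "y \<noteq> right_child (last os)"
      "\<forall>a. (a, y) \<in> E \<longrightarrow> a \<in> set (es @ [u])"
  shows "y \<in> right_child ` set (butlast os)"
proof -
  have "(u, y) \<notin> E" using thread_end_child_not_ready[OF nc nm] y(4) unfolding ready_def by blast
  hence "\<forall>a. (a, y) \<in> E \<longrightarrow> a \<in> set es" using y(4) by auto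
  hence "y \<in> right_child ` set os" using ready_in_deque y(1,2) by simp
  moreover have "os \<noteq> []" using open_empty_iff_main_thread nm by blast
  ultimately show ?thesis using y(3) by (cases os rule: rev_cases) auto
qed

lemma thread_end_invariant:
  assumes nc: "\<nexists>d. (u, d) \<in> C" and nm: "u \<notin> thread_of C r"
  defines "w \<equiv> last os"
  shows "dfs_inv (es @ [u]) (right_child w) (butlast os)"
  unfolding dfs_inv_def
proof (intro conjI)
  have ne: "os \<noteq> []" using open_empty_iff_main_thread nm by blast
  have os: "os = butlast os @ [w]" using ne w_def by simp
  have w_open: "w \<in> set os" using ne w_def by simp
  have wl: "(w, left_child w) \<in> F" and wrc: "(w, right_child w) \<in> C"
    using open_fork[OF w_open] right_child_of_fork by blast+
  have nf: "\<nexists>l. (u, l) \<in> F" using fork_has_right_child nc by blast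
  have w_new: "w \<notin> set (butlast os)"
    using open_distinct os by (metis distinct_append disjoint_iff list.set_intros(1))
  have set_os: "set os = insert w (set (butlast os))"
    using os by (metis Un_insert_right append_Nil2 list.simps(15) set_append)
  show "right_child w \<in> V" using wrc C_in_V by blast
  show "set (es @ [u]) \<subseteq> V" using current_in_V executed_in_V by simp
  show "right_child w \<notin> set (es @ [u])"
    using open_right_child_pending[OF w_open] open_right_child_not_current[OF w_open] by simp
  show "\<forall>a. (a, right_child w) \<in> E \<longrightarrow> a \<in> set (es @ [u])"
    using right_child_parents[OF wl wrc] w_open open_executed by auto
  show "\<forall>a b. (a, b) \<in> E \<longrightarrow> b \<in> set (es @ [u]) \<longrightarrow> a \<in> set (es @ [u])"
    using executed_closed_snoc by blast
  show "set (butlast os) \<subseteq> set (es @ [u])" using open_executed set_os by auto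
  show "distinct (butlast os)" using open_distinct by (simp add: distinct_butlast)
  show "\<forall>v\<in>set (butlast os). (v, left_child v) \<in> F" using open_fork set_os by auto
  show "fork_chain r (butlast os)" using open_chain os fork_chain_snoc by metis
  have "(chain_top r (butlast os), w) \<in> C\<^sup>*" using open_chain os fork_chain_snoc by metis
  then show "(chain_top r (butlast os), right_child w) \<in> C\<^sup>*"
    using wrc by (meson rtrancl.rtrancl_into_rtrancl)
  show "\<forall>v\<in>set (es @ [u]). (\<exists>l. (v, l) \<in> F) \<longrightarrow> v \<notin> set (butlast os) \<longrightarrow>
      (\<forall>y. (left_child v, y) \<in> C\<^sup>* \<longrightarrow> y \<in> set (es @ [u]))"
    using closed_fork_finished top_thread_finished[OF nc ne] nf set_os w_def by auto
  show "\<forall>v\<in>set (butlast os). \<forall>a b. (a, b) \<in> E \<longrightarrow> a \<notin> set (es @ [u]) \<longrightarrow> b \<notin> set (es @ [u]) \<longrightarrow>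
      (left_child v, b) \<in> R\<^sup>* \<longrightarrow> (left_child v, a) \<in> R\<^sup>*"
    using open_subtree_entry set_os by simp
  show "\<forall>v\<in>set (butlast os). right_child v \<notin> set (es @ [u]) \<and> right_child v \<noteq> right_child w"
  proof
    fix v assume v: "v \<in> set (butlast os)"
    hence v_open: "v \<in> set os" using set_os by blast
    have "right_child v \<noteq> right_child w"
      using right_child_of_fork[OF open_fork[OF v_open]] wrc C_injective v w_new by metis
    then show "right_child v \<notin> set (es @ [u]) \<and> right_child v \<noteq> right_child w"
      using open_right_child_pending[OF v_open] open_right_child_not_current[OF v_open] by simp
  qed
  show "\<forall>y\<in>V. y \<notin> set (es @ [u]) \<longrightarrow> y \<noteq> right_child w \<longrightarrow>
      (\<forall>a. (a, y) \<in> E \<longrightarrow> a \<in> set (es @ [u])) \<longrightarrow> y \<in> right_child ` set (butlast os)"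
    using thread_end_ready_in_deque[OF nc nm] w_def by blast
  show "right_child_follows (es @ [u])" using right_child_follows_snoc history_follows history_next by blast
  show "right_child_next (es @ [u]) (right_child w)" using thread_end_returns[OF nc nm] w_def by simp
  show "future_parents_precede (es @ [u])"
    using future_parents_precede_snoc[OF history_precede] nc by blast
qed

lemma all_executed_at_end:
  assumes "{c. (u, c) \<in> E} = {}" "os = []"
  shows "V \<subseteq> set (es @ [u])"
proof -
  have "y \<in> V \<longrightarrow> y \<in> set (es @ [u])" for y
  proof (induction y rule: wf_induct_rule[OF wf_E, case_names less])
    case (less y)
    show ?case
    proof (rule impI, rule ccontr)
      assume y: "y \<in> V" "y \<notin> set (es @ [u])"
      have "a \<in> set es" if "(a, y) \<in> E" for a
        using less.IH[OF that] that edges_in_V assms(1) by auto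
      then show False using ready_in_deque[OF y(1)] y(2) assms(2) by simp
    qed
  qed
  then show ?thesis by blast
qed

lemma final_transition:
  assumes nc: "\<nexists>d. (u, d) \<in> C" and main: "u \<in> thread_of C r"
  shows "seq_step C F T (es, Some u, map right_child os) (es @ [u], None, [])"
proof -
  have nf: "\<nexists>l. (u, l) \<in> F" using fork_has_right_child nc by blast
  have "{c. (u, c) \<in> E} = {}" using nc nf touch_edge main unfolding edges_def by blast
  hence "seq_step C F T (es, Some u, []) (es @ [u], None, [])"
    by (intro seq_step.idle[OF nf]) simp
  then show ?thesis using open_empty_iff_main_thread main by simp
qed

lemma final_complete:
  assumes nc: "\<nexists>d. (u, d) \<in> C" and main: "u \<in> thread_of C r"
  shows "complete_run (es @ [u])"
proof -
  have nf: "\<nexists>l. (u, l) \<in> F" using fork_has_right_child nc by blast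
  have no_touch: "\<forall>x. (u, x) \<notin> T" using touch_edge main by blast
  have "{c. (u, c) \<in> E} = {}" using nc nf no_touch unfolding edges_def by blast
  then show ?thesis
    unfolding complete_run_def
    using all_executed_at_end open_empty_iff_main_thread main
      right_child_follows_snoc[OF history_follows history_next]
      future_parents_precede_snoc[OF history_precede] nc no_touch by auto
qed

lemma dfs_step:
  "(\<exists>u' os'. (seq_step C F T)\<^sup>+\<^sup>+ (es, Some u, map right_child os) (es @ [u], Some u', map right_child os') \<and>
      dfs_inv (es @ [u]) u' os') \<or>
   (seq_step C F T (es, Some u, map right_child os) (es @ [u], None, []) \<and> complete_run (es @ [u]))"
proof -
  consider (fork) l where "(u, l) \<in> F" | (continue) c where "(u, c) \<in> C" "\<nexists>l. (u, l) \<in> F"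
    | (thread_end) "\<nexists>d. (u, d) \<in> C" "u \<notin> thread_of C r"
    | (final) "\<nexists>d. (u, d) \<in> C" "u \<in> thread_of C r"
    by blast
  then show ?thesis
  proof cases
    case fork
    have "seq_step C F T (es, Some u, map right_child os) (es @ [u], Some l, map right_child (os @ [u]))"
      using fork_transition[OF fork] by simp
    then show ?thesis using fork_invariant[OF fork] by blast
  next
    case continue
    then show ?thesis using continue_transition continue_invariant by blast
  next
    case thread_end
    then show ?thesis using thread_end_transition thread_end_invariant by blast
  next
    case final
    then show ?thesis using final_transition final_complete by blast
  qed
qed

end

context single_touch_computation
begin

lemma dfs_inv_init: "dfs_inv [] r []"
  unfolding dfs_inv_def
proof (intro conjI)
  show "\<forall>y\<in>V. y \<notin> set [] \<longrightarrow> y \<noteq> r \<longrightarrow> (\<forall>a. (a, y) \<in> E \<longrightarrow> a \<in> set []) \<longrightarrow> y \<in> right_child ` set []"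
  proof (intro ballI impI)
    fix y assume y: "y \<in> V" "y \<notin> set []" "y \<noteq> r" "\<forall>a. (a, y) \<in> E \<longrightarrow> a \<in> set []"
    have "indeg E y \<noteq> 0" using indeg_nonroot[OF y(1,3)] by auto
    then show "y \<in> right_child ` set []" using y(4) unfolding indeg_def by auto
  qed
qed (auto simp: root_in_V root_no_parent chain_top_def right_child_follows_def right_child_next_def
    future_parents_precede_def)

lemma dfs_run_terminates:
  "dfs_inv es u os \<Longrightarrow> \<exists>es'. (seq_step C F T)\<^sup>*\<^sup>* (es, Some u, map right_child os) (es', None, [])"
proof (induction "card (V - set es)" arbitrary: es u os rule: less_induct)
  case less
  interpret dfs_state V C F T r f es u os by unfold_locales (fact less.prems)
  have "card (V - set (es @ [u])) < card (V - set es)"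
    using current_in_V current_not_executed finite_V by (intro psubset_card_mono) auto
  then show ?case using dfs_step less.hyps
    by (meson r_into_rtranclp rtranclp_trans tranclp_into_rtranclp)
qed

lemma dfs_run_complete:
  "dfs_inv es u os \<Longrightarrow> (seq_step C F T)\<^sup>*\<^sup>* (es, Some u, map right_child os) (es', None, []) \<Longrightarrow>
   complete_run es'"
proof (induction "card (V - set es)" arbitrary: es u os rule: less_induct)
  case less
  interpret dfs_state V C F T r f es u os by unfold_locales (fact less.prems(1))
  have smaller: "card (V - set (es @ [u])) < card (V - set es)"
    using current_in_V current_not_executed finite_V by (intro psubset_card_mono) auto
  have comparable: "(seq_step C F T)\<^sup>*\<^sup>* s (es', None, []) \<or> s = (es', None, [])"
    if "(seq_step C F T)\<^sup>*\<^sup>* (es, Some u, map right_child os) s" for s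
    using right_unique_rtranclp_comparable[OF right_unique_seq_step less.prems(2) that] seq_step_stops
    by blast
  from dfs_step show ?case
  proof (elim disjE exE conjE)
    fix u' os'
    assume "(seq_step C F T)\<^sup>+\<^sup>+ (es, Some u, map right_child os) (es @ [u], Some u', map right_child os')"
      and inv': "dfs_inv (es @ [u]) u' os'"
    then show "complete_run es'"
      using comparable[OF tranclp_into_rtranclp] less.hyps[OF smaller inv'] by blast
  next
    assume "seq_step C F T (es, Some u, map right_child os) (es @ [u], None, [])"
      and "complete_run (es @ [u])"
    then show "complete_run es'" using comparable seq_step_stops by blast
  qed
qed

lemma seq_exec_exists: "\<exists>es. seq_exec C F T r es"
  using dfs_run_terminates[OF dfs_inv_init] unfolding seq_exec_def by simp

lemma seq_exec_complete: "seq_exec C F T r es \<Longrightarrow> complete_run es"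
  using dfs_run_complete[OF dfs_inv_init] unfolding seq_exec_def by simp

end

theorem mainTheorem1:
  fixes V :: "'v set" and C F T :: "('v \<times> 'v) set" and r f :: 'v
  assumes "future_dag V C F T r f"
    and "structured_single_touch C F T"
  shows "(\<exists>es. seq_exec C F T r es) \<and>
         (\<forall>es. seq_exec C F T r es \<longrightarrow>
            (\<forall>x v l rc fp lp.
               (v, l) \<in> F \<longrightarrow> (v, rc) \<in> C \<longrightarrow> fp \<in> thread_of C l \<longrightarrow>
               (fp, x) \<in> T \<longrightarrow> (lp, x) \<in> C \<longrightarrow>
               (\<exists>i j. i < j \<and> j < length es \<and> es ! i = fp \<and> es ! j = lp) \<and>
               (\<exists>i. Suc i < length es \<and> es ! i = fp \<and> es ! Suc i = rc)))"
proof -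
  interpret single_touch_computation V C F T r f
    by unfold_locales (fact assms)+
  show ?thesis
  proof (intro conjI allI impI)
    show "\<exists>es. seq_exec C F T r es" by (rule seq_exec_exists)
  next
    fix es x fp lp
    assume "seq_exec C F T r es" "(fp, x) \<in> T" "(lp, x) \<in> C"
    then show "\<exists>i j. i < j \<and> j < length es \<and> es ! i = fp \<and> es ! j = lp"
      using complete_run_future_parent_first[OF seq_exec_complete] by blast
  next
    fix es x v l rc fp
    assume "seq_exec C F T r es" "(v, l) \<in> F" "(v, rc) \<in> C" "fp \<in> thread_of C l" "(fp, x) \<in> T"
    then show "\<exists>i. Suc i < length es \<and> es ! i = fp \<and> es ! Suc i = rc"
      using complete_run_right_child_next[OF seq_exec_complete] by blast
  qed
qed

end
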